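(* Let $\mathcal{H}\cong\mathbb{C}^n$, let $\gamma>0$, and let $\mathcal{F}:\mathcal{D}(\mathcal{H})\to\mathcal{B}(\mathcal{H})$ be continuous and satisfy $$0\le\langle x,\mathcal{F}(x)-\mathcal{F}(y)\rangle\le\gamma\, S(x\,\|\,y)\qquad\text{for all }x,y\in\operatorname{relint}\mathcal{D}(\mathcal{H}).$$ Consider the quantum Blahut-Arimoto iterates, started from $x^0\in\operatorname{relint}\mathcal{D}(\mathcal{H})$, $$y^{k+1}=x^k,\qquad x^{k+1}=\frac{\exp\big(\log(y^{k+1})-\mathcal{F}(y^{k+1})/\gamma\big)}{\operatorname{tr}\big[\exp\big(\log(y^{k+1})-\mathcal{F}(y^{k+1})/\gamma\big)\big]},$$ and let $f(x)=\langle x,\mathcal{F}(x)\rangle$ on $\mathcal{D}(\mathcal{H})$. Then these iterates are exactly the mirror descent iterates for minimizing $f$ over $\mathcal{C}=\mathcal{D}(\mathcal{H})$ with kernel $\varphi=-S$ and constant step size $t_k=1/\gamma$, and moreover: (a) $f(x)=\langle x,\nabla f(x)\rangle$ and $\nabla f(x)=\mathcal{F}(x)$ for all $x\in\operatorname{relint}\mathcal{D}(\mathcal{H})$; (b) $f$ is $\gamma$-smooth relative to $-S$ on $\mathcal{D}(\mathcal{H})$. If additionally there is $a>0$ with $\langle x,\mathcal{F}(x)-\mathcal{F}(y)\rangle\ge a\,S(x\,\|\,y)$ for all $x,y\in\operatorname{relint}\mathcal{D}(\mathcal{H})$, then $f$ is also $a$-strongly convex relative to $-S$ on $\mathcal{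D}(\mathcal{H})$.
   Context: $\mathcal{B}(\mathcal{H})$ is the real vector space of self-adjoint operators on $\mathcal{H}$ with inner product $\langle X,Y\rangle=\operatorname{tr}[XY]$; $\mathcal{D}(\mathcal{H})=\{\rho\succeq0:\operatorname{tr}\rho=1\}$ is the set of density matrices, whose relative interior consists of the positive definite density matrices. $S(\rho)=-\operatorname{tr}[\rho\log\rho]$ is the von Neumann entropy and $S(\rho\,\|\,\sigma)=\operatorname{tr}[\rho(\log\rho-\log\sigma)]$ the quantum relative entropy. For a Legendre kernel $\varphi$ (proper, lsc, strictly convex, essentially smooth) with Bregman divergence $D_\varphi(x\,\|\,y)=\varphi(x)-\varphi(y)-\langle\nabla\varphi(y),x-y\rangle$, the mirror descent iterates for minimizing a differentiable $f$ over a convex set $\mathcal{C}\subseteq\operatorname{dom}\varphi$ with step sizes $t_k>0$ are $x^{k+1}=\arg\min_{x\in\mathcal{C}}\{\langle\nabla f(x^k),x\rangle+\frac1{t_k}D_\varphi(x\,\|\,x^k)\}$. For $\varphi=-S$ on positive semidefinite matrices, $D_\varphi(\rho\,\|\,\sigma)=S(\rho\,\|\,\sigma)-\operatorname{tr}[\rho-\sigma]$. $f$ is $L$-smooth (resp. $\mu$-strongly convex) relative to $\varphi$ on $\mathcal{C}$ if $L\varphi-f$ (resp. $f-\mu\varphi$) is convex on $\operatorname{relint}\mathcal{C}$. *)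

theory Defs
  imports "HOL-Analysis.Analysis"
begin

text \<open>Operators on H = C^n are modelled as complex n x n matrices of type
  complex^'n^'n with 'n a finite type (n = CARD('n)).\<close>

definition cadj :: "complex^'n^'n \<Rightarrow> complex^'n^'n" where
  "cadj A = (\<chi> i j. cnj (A $ j $ i))"

definition hermitian :: "complex^'n^'n \<Rightarrow> bool" where
  "hermitian A \<longleftrightarrow> cadj A = A"

definition unitary :: "complex^'n^'n \<Rightarrow> bool" where
  "unitary U \<longleftrightarrow> U ** cadj U = mat 1 \<and> cadj U ** U = mat 1"

definition rdiag :: "('n \<Rightarrow> real) \<Rightarrow> complex^'n^'n" where
  "rdiag d = (\<chi> i j. if i = j then complex_of_real (d i) else 0)"

definition qform :: "complex^'n^'n \<Rightarrow> complex^'n \<Rightarrow> complex" where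
  "qform A v = (\<Sum>i\<in>UNIV. cnj (v $ i) * (A *v v) $ i)"

definition psd :: "complex^'n^'n \<Rightarrow> bool" where
  "psd A \<longleftrightarrow> hermitian A \<and> (\<forall>v. 0 \<le> Re (qform A v))"

definition pd :: "complex^'n^'n \<Rightarrow> bool" where
  "pd A \<longleftrightarrow> hermitian A \<and> (\<forall>v. v \<noteq> 0 \<longrightarrow> 0 < Re (qform A v))"

text \<open>Density matrices D(H) and their relative interior (positive definite ones).\<close>
definition density :: "(complex^'n^'n) set" where
  "density = {A. psd A \<and> trace A = 1}"

definition density_ri :: "(complex^'n^'n) set" where
  "density_ri = {A. pd A \<and> trace A = 1}"

definition hs_inner :: "complex^'n^'n \<Rightarrow> complex^'n^'n \<Rightarrow> real" where
  "hs_inner X Y = Re (trace (X ** Y))"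

definition matfun :: "(real \<Rightarrow> real) \<Rightarrow> complex^'n^'n \<Rightarrow> complex^'n^'n" where
  "matfun g A = (SOME M. \<exists>U d. unitary U \<and> A = U ** rdiag d ** cadj U
                              \<and> M = U ** rdiag (g \<circ> d) ** cadj U)"

definition mexp :: "complex^'n^'n \<Rightarrow> complex^'n^'n" where
  "mexp A = matfun exp A"

definition mlog :: "complex^'n^'n \<Rightarrow> complex^'n^'n" where
  "mlog A = matfun ln A"

text \<open>tr[rho log rho], with the convention 0 log 0 = 0; this is -S(rho), i.e. the kernel phi.\<close>
definition negentropy :: "complex^'n^'n \<Rightarrow> real" where
  "negentropy \<rho> = Re (trace (matfun (\<lambda>t. t * ln t) \<rho>))"

definition vn_entropy :: "complex^'n^'n \<Rightarrow> real" where
  "vn_entropy \<rho> = - negentropy \<rho>"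

definition rel_entropy :: "complex^'n^'n \<Rightarrow> complex^'n^'n \<Rightarrow> real" where
  "rel_entropy \<rho> \<sigma> = negentropy \<rho> - Re (trace (\<rho> ** mlog \<sigma>))"

definition bregman_negent :: "complex^'n^'n \<Rightarrow> complex^'n^'n \<Rightarrow> real" where
  "bregman_negent \<rho> \<sigma> = rel_entropy \<rho> \<sigma> - Re (trace (\<rho> - \<sigma>))"

definition qba_step :: "(complex^'n^'n \<Rightarrow> complex^'n^'n) \<Rightarrow> real \<Rightarrow> complex^'n^'n \<Rightarrow> complex^'n^'n" where
  "qba_step F \<gamma> y =
     (let E = mexp (mlog y - (1 / \<gamma>) *\<^sub>R F y) in (1 / Re (trace E)) *\<^sub>R E)"

primrec qba_iter :: "(complex^'n^'n \<Rightarrow> complex^'n^'n) \<Rightarrow> real \<Rightarrow> complex^'n^'n \<Rightarrow> nat \<Rightarrow> complex^'n^'n" where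
  "qba_iter F \<gamma> x0 0 = x0"
| "qba_iter F \<gamma> x0 (Suc k) = qba_step F \<gamma> (qba_iter F \<gamma> x0 k)"

end

(* The Blahut-Arimoto update is a Gibbs state: with H = log y - F(y)/gamma, the new iterate
   is exp H / tr exp H, so its logarithm is H up to a multiple of the identity.  Substituting
   this into the mirror descent objective <F(y), x> + gamma D(x || y) turns it, up to an additive
   constant, into gamma S(x || x'), and Klein's inequality (S(x || s) >= 0 with equality only at
   x = s) shows that the new iterate x' is its unique minimiser over the density matrices.
   Relative smoothness and strong convexity hold because the hypotheses on F say precisely
   that X |-> tr[X (c log z - G z)] is an affine minorant of c (-S) - <., G .> touching it at z.
   For the gradient, the hypothesis at (x, y) and at (y, x) squeezes the Taylor remainder of
   f between 0 and <y - x, F y - F x>, which is o(|y - x|) by continuity of F.  Everything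
   rests on the spectral theorem for Hermitian matrices, proved by maximising the quadratic
   form on unit spheres of invariant subspaces. *)

theory Submission
  imports Defs
begin


lemma matrix_mul_rdiag_nth: "(A ** rdiag d) $ i $ j = A $ i $ j * complex_of_real (d j)"
proof -
  have "(A ** rdiag d) $ i $ j = (\<Sum>k\<in>UNIV. if k = j then A $ i $ k * complex_of_real (d k) else 0)"
    unfolding matrix_matrix_mult_def rdiag_def vec_lambda_beta by (rule sum.cong) auto
  then show ?thesis by simp
qed

lemma rdiag_matrix_mul_nth: "(rdiag d ** A) $ i $ j = complex_of_real (d i) * A $ i $ j"
proof -
  have "(rdiag d ** A) $ i $ j = (\<Sum>k\<in>UNIV. if i = k then complex_of_real (d k) * A $ k $ j else 0)"
    unfolding matrix_matrix_mult_def rdiag_def vec_lambda_beta by (rule sum.cong) auto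
  then show ?thesis by simp
qed

lemma rdiag_mult_vec_nth: "(rdiag d *v v) $ j = complex_of_real (d j) * v $ j"
proof -
  have "(rdiag d *v v) $ j = (\<Sum>k\<in>UNIV. if k = j then complex_of_real (d j) * v $ j else 0)"
    unfolding matrix_vector_mult_def rdiag_def vec_lambda_beta by (rule sum.cong) auto
  then show ?thesis by simp
qed

lemma rdiag_mul_rdiag: "rdiag a ** rdiag b = rdiag (\<lambda>i. a i * b i)"
  by (simp add: vec_eq_iff rdiag_matrix_mul_nth) (simp add: rdiag_def)

lemma trace_rdiag: "trace (rdiag d) = complex_of_real (\<Sum>i\<in>UNIV. d i)"
  by (simp add: trace_def rdiag_def)

lemma scaleR_eq_of_real_smult: "(c::real) *\<^sub>R (v::complex^'n) = complex_of_real c *s v"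
  by (simp only: vec_eq_iff vector_scaleR_component) (simp add: scaleR_conv_of_real)

lemma rdiag_scaleR: "rdiag (\<lambda>i. c * d i) = c *\<^sub>R rdiag d"
  by (simp add: rdiag_def vec_eq_iff) (simp add: scaleR_conv_of_real)

lemma rdiag_diff_const: "rdiag (\<lambda>i. d i - c) = rdiag d - c *\<^sub>R mat 1"
  by (simp add: rdiag_def vec_eq_iff mat_def) (simp add: scaleR_conv_of_real)

lemma cadj_cadj [simp]: "cadj (cadj A) = A"
  by (simp add: cadj_def vec_eq_iff)

lemma cadj_matrix_mul: "cadj (A ** B) = cadj B ** cadj A"
  by (simp add: cadj_def vec_eq_iff matrix_matrix_mult_def mult.commute)

lemma cadj_add: "cadj (A + B) = cadj A + cadj B"
  by (simp add: cadj_def vec_eq_iff)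

lemma cadj_diff: "cadj (A - B) = cadj A - cadj B"
  by (simp add: cadj_def vec_eq_iff)

lemma cadj_scaleR: "cadj (c *\<^sub>R A) = c *\<^sub>R cadj A"
  by (simp add: cadj_def vec_eq_iff)

lemma cadj_rdiag [simp]: "cadj (rdiag d) = rdiag d"
  by (simp add: cadj_def vec_eq_iff rdiag_def)

lemma hermitian_diff: "hermitian A \<Longrightarrow> hermitian B \<Longrightarrow> hermitian (A - B)"
  by (simp add: hermitian_def cadj_diff)

lemma hermitian_scaleR: "hermitian A \<Longrightarrow> hermitian (c *\<^sub>R A)"
  by (simp add: hermitian_def cadj_scaleR)

lemma hermitian_unitary_conj: "hermitian (U ** rdiag d ** cadj U)"
  unfolding hermitian_def cadj_matrix_mul by (simp add: matrix_mul_assoc)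

lemma unitary_cadj: "unitary U \<Longrightarrow> unitary (cadj U)"
  by (simp add: unitary_def)

lemma unitary_matrix_mul: "unitary U \<Longrightarrow> unitary V \<Longrightarrow> unitary (U ** V)"
  unfolding unitary_def cadj_matrix_mul
  by (metis matrix_mul_assoc matrix_mul_rid)

lemma trace_unitary_similar: "unitary V \<Longrightarrow> trace (V ** M ** cadj V) = trace M"
  by (metis trace_mul_sym matrix_mul_assoc unitary_def matrix_mul_lid)

lemma trace_unitary_conj:
  "unitary U \<Longrightarrow> trace (U ** rdiag d ** cadj U) = complex_of_real (\<Sum>i\<in>UNIV. d i)"
  by (simp add: trace_unitary_similar trace_rdiag)

lemma unitary_conj_mult:
  assumes "unitary U"
  shows "(U ** rdiag a ** cadj U) ** (U ** rdiag b ** cadj U)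
    = U ** rdiag (\<lambda>i. a i * b i) ** cadj U"
proof -
  have "(U ** rdiag a ** cadj U) ** (U ** rdiag b ** cadj U)
      = U ** rdiag a ** (cadj U ** U) ** rdiag b ** cadj U"
    by (simp add: matrix_mul_assoc)
  also have "\<dots> = U ** (rdiag a ** rdiag b) ** cadj U"
    using assms by (simp add: unitary_def matrix_mul_assoc)
  finally show ?thesis by (simp add: rdiag_mul_rdiag)
qed

lemma matrix_diff_ldistrib: "(A::'a::ring_1^'n^'m) ** (B - C) = A ** B - A ** C"
  by (simp add: vec_eq_iff matrix_matrix_mult_def right_diff_distrib sum_subtractf)

lemma matrix_diff_rdistrib: "((A::'a::ring_1^'n^'m) - B) ** C = A ** C - B ** C"
  by (simp add: vec_eq_iff matrix_matrix_mult_def left_diff_distrib sum_subtractf)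

lemma matrix_add_rdistrib: "((A::'a::semiring_1^'n^'m) + B) ** C = A ** C + B ** C"
  by (simp add: vec_eq_iff matrix_matrix_mult_def distrib_right sum.distrib)

lemma trace_scaleR: "trace (c *\<^sub>R (A::complex^'n^'n)) = complex_of_real c * trace A"
  by (simp only: trace_def vector_scaleR_component) (simp add: sum_distrib_left scaleR_conv_of_real)

lemma scaleR_unitary_conj: "c *\<^sub>R (U ** rdiag d ** cadj U) = U ** rdiag (\<lambda>i. c * d i) ** cadj U"
  by (simp add: rdiag_scaleR matrix_scalar_ac scalar_matrix_assoc[symmetric])

lemma unitary_conj_diff_const:
  "unitary U \<Longrightarrow> U ** rdiag (\<lambda>i. d i - c) ** cadj U = U ** rdiag d ** cadj U - c *\<^sub>R mat 1"
  by (simp add: rdiag_diff_const matrix_diff_ldistrib matrix_diff_rdistrib matrix_scalar_ac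
      scalar_matrix_assoc[symmetric] unitary_def)

lemma hs_inner_commute: "hs_inner X Y = hs_inner Y X"
  unfolding hs_inner_def by (subst trace_mul_sym) (rule refl)

lemma hs_inner_add_left: "hs_inner (X + Y) Z = hs_inner X Z + hs_inner Y Z"
  by (simp add: hs_inner_def matrix_add_rdistrib trace_add)

lemma hs_inner_scaleR_left: "hs_inner (c *\<^sub>R X) Y = c * hs_inner X Y"
  by (simp add: hs_inner_def scalar_matrix_assoc[symmetric] trace_scaleR)

lemma hs_inner_scaleR_right: "hs_inner X (c *\<^sub>R Y) = c * hs_inner X Y"
  by (simp add: hs_inner_def matrix_scalar_ac scalar_matrix_assoc[symmetric] trace_scaleR)

lemma hs_inner_diff_left: "hs_inner (X - Y) Z = hs_inner X Z - hs_inner Y Z"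
  by (simp add: hs_inner_def matrix_diff_rdistrib trace_sub)

lemma hs_inner_diff_right: "hs_inner X (Y - Z) = hs_inner X Y - hs_inner X Z"
  by (simp add: hs_inner_def matrix_diff_ldistrib trace_sub)

lemma hs_inner_minus_right: "hs_inner X (- Y) = - hs_inner X Y"
  using hs_inner_diff_right[of X 0 Y] by (simp add: hs_inner_def trace_def)

section \<open>The spectral theorem for Hermitian matrices\<close>

definition cinner :: "complex^'n \<Rightarrow> complex^'n \<Rightarrow> complex" where
  "cinner x y = (\<Sum>i\<in>UNIV. cnj (x $ i) * y $ i)"

lemma cinner_add_left: "cinner (x + y) z = cinner x z + cinner y z"
  by (simp add: cinner_def distrib_right sum.distrib)

lemma cinner_add_right: "cinner x (y + z) = cinner x y + cinner x z"
  by (simp add: cinner_def distrib_left sum.distrib)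

lemma cinner_diff_right: "cinner x (y - z) = cinner x y - cinner x z"
  by (simp add: cinner_def right_diff_distrib sum_subtractf)

lemma cinner_scaleR_left: "cinner (c *\<^sub>R x) y = complex_of_real c * cinner x y"
  by (simp add: cinner_def sum_distrib_left mult_ac) (simp add: scaleR_conv_of_real)

lemma cinner_scaleR_right: "cinner x (c *\<^sub>R y) = complex_of_real c * cinner x y"
  by (simp add: cinner_def sum_distrib_left mult_ac) (simp add: scaleR_conv_of_real)

lemma cinner_smult_left: "cinner (c *s x) y = cnj c * cinner x y"
  by (simp add: cinner_def sum_distrib_left mult_ac)

lemma cinner_zero_right [simp]: "cinner x 0 = 0"
  by (simp add: cinner_def)

lemma cnj_cinner: "cnj (cinner x y) = cinner y x"
  by (simp add: cinner_def mult.commute)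

lemma cnj_mult_self: "cnj z * z = complex_of_real ((cmod z)\<^sup>2)"
  by (metis complex_norm_square mult.commute)

lemma cinner_self: "cinner x x = complex_of_real ((norm x)\<^sup>2)"
proof -
  have "cinner x x = (\<Sum>i\<in>UNIV. complex_of_real ((cmod (x $ i))\<^sup>2))"
    unfolding cinner_def by (simp add: cnj_mult_self)
  also have "\<dots> = complex_of_real ((norm x)\<^sup>2)"
    by (simp add: norm_vec_def L2_set_def sum_nonneg)
  finally show ?thesis .
qed

lemma inner_eq_Re_cinner: "inner x y = Re (cinner x y)"
  by (simp add: inner_vec_def cinner_def inner_complex_def Re_sum)

lemma cinner_eq_0_iff_orthogonal:
  "cinner x y = 0 \<longleftrightarrow> orthogonal x y \<and> orthogonal (\<i> *s x) y"
proof -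
  have "inner (\<i> *s x) y = Im (cinner x y)"
    by (simp add: inner_eq_Re_cinner cinner_smult_left)
  then show ?thesis by (simp add: orthogonal_def inner_eq_Re_cinner complex_eq_iff)
qed

lemma cinner_matrix_vector_mult: "cinner x (A *v y) = cinner (cadj A *v x) y"
  unfolding cinner_def cadj_def matrix_vector_mult_def
  by (simp add: sum_distrib_left sum_distrib_right mult_ac) (rule sum.swap)

lemma hermitian_cinner: "hermitian A \<Longrightarrow> cinner x (A *v y) = cinner (A *v x) y"
  by (simp add: hermitian_def cinner_matrix_vector_mult)

lemma qform_eq_cinner: "qform A v = cinner v (A *v v)"
  by (simp add: qform_def cinner_def)

lemma hermitian_qform_real: "hermitian A \<Longrightarrow> qform A v = complex_of_real (Re (qform A v))"
  by (metis qform_eq_cinner cnj_cinner hermitian_cinner Reals_cnj_iff complex_is_Real_iff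
      of_real_Re)

lemma continuous_on_qform: "continuous_on S (\<lambda>v. Re (qform A v))"
  unfolding qform_def matrix_vector_mult_def by (intro continuous_intros)

lemma matrix_vector_mult_scaleR_right: "(A::'a::real_algebra_1^'n^'m) *v (c *\<^sub>R v) = c *\<^sub>R (A *v v)"
  by (simp add: vec_eq_iff matrix_vector_mult_def scaleR_sum_right)

lemma qform_scaleR: "qform A (c *\<^sub>R v) = complex_of_real (c\<^sup>2) * qform A v"
  by (simp add: qform_eq_cinner matrix_vector_mult_scaleR_right cinner_scaleR_left
      cinner_scaleR_right power2_eq_square)

lemma quadratic_nonpos_imp_nonpos:
  fixes a b :: real
  assumes "\<And>t. t > 0 \<Longrightarrow> 2 * t * a + t\<^sup>2 * b \<le> 0"
  shows "a \<le> 0"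
proof (rule ccontr)
  assume "\<not> a \<le> 0"
  then have a: "a > 0" by simp
  define t where "t = a / (\<bar>b\<bar> + 1)"
  have t: "t > 0" "t * \<bar>b\<bar> \<le> a"
    using a by (auto simp: t_def field_simps)
  have "t * b \<ge> - a" using t abs_le_iff[of "t * b"] by (simp add: abs_mult)
  then have "t * a \<le> t * (2 * a + t * b)"
    using t(1) by (intro mult_left_mono) auto
  also have "\<dots> \<le> 0" using assms[OF t(1)] by (simp add: power2_eq_square algebra_simps)
  finally show False using t a mult_pos_pos[of t a] by linarith
qed

lemma hermitian_qform_add_scaleR:
  fixes A :: "complex^'n^'n"
  assumes herm: "hermitian A"
  shows "Re (qform A (v + t *\<^sub>R r))
    = Re (qform A v) + 2 * t * Re (cinner r (A *v v)) + t\<^sup>2 * Re (qform A r)"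
proof -
  have "cinner v (A *v r) = cnj (cinner r (A *v v))"
    by (simp add: hermitian_cinner[OF herm] cnj_cinner)
  moreover have "qform A (v + t *\<^sub>R r) = qform A v + of_real t * cinner v (A *v r)
      + of_real t * cinner r (A *v v) + of_real (t\<^sup>2) * qform A r"
    unfolding qform_eq_cinner matrix_vector_right_distrib matrix_vector_mult_scaleR_right
      cinner_add_left cinner_add_right cinner_scaleR_left cinner_scaleR_right
    by (simp add: power2_eq_square algebra_simps)
  ultimately show ?thesis by simp
qed

text \<open>First variation: the residual \<open>r\<close> lies in the subspace and is orthogonal to \<open>v\<close>,
  and moving from \<open>v\<close> along \<open>r\<close> would increase the Rayleigh quotient to first order by
  \<open>2 \<parallel>r\<parallel>\<^sup>2\<close>.\<close>
lemma hermitian_rayleigh_max_eigenvector: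
  fixes A :: "complex^'n^'n"
  assumes herm: "hermitian A" and W: "subspace W" and inv: "\<And>x. x \<in> W \<Longrightarrow> A *v x \<in> W"
    and v: "v \<in> W" "norm v = 1"
    and max: "\<And>y. y \<in> W \<Longrightarrow> Re (qform A y) \<le> Re (qform A v) * (norm y)\<^sup>2"
  shows "A *v v = complex_of_real (Re (qform A v)) *s v"
proof -
  define lam where "lam = Re (qform A v)"
  define r where "r = A *v v - lam *\<^sub>R v"
  define nr where "nr = (norm r)\<^sup>2"
  have vv: "cinner v v = 1" using v by (simp add: cinner_self)
  have rW: "r \<in> W" unfolding r_def by (intro subspace_diff subspace_scale W inv v)
  have "cinner v (A *v v) = complex_of_real lam"
    unfolding lam_def qform_eq_cinner[symmetric] by (rule hermitian_qform_real[OF herm])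
  then have vr: "cinner v r = 0" by (simp add: r_def cinner_diff_right cinner_scaleR_right vv)
  then have rv: "cinner r v = 0" using cnj_cinner[of v r] by simp
  have rr: "cinner r r = complex_of_real nr" by (simp add: nr_def cinner_self)
  have "2 * t * nr + t\<^sup>2 * (Re (qform A r) - lam * nr) \<le> 0" for t
  proof -
    have "A *v v = r + lam *\<^sub>R v" by (simp add: r_def)
    then have "cinner r (A *v v) = complex_of_real nr"
      by (simp add: cinner_add_right cinner_scaleR_right rv rr)
    then have "Re (qform A (v + t *\<^sub>R r)) = lam + 2 * t * nr + t\<^sup>2 * Re (qform A r)"
      by (simp add: hermitian_qform_add_scaleR[OF herm] lam_def)
    moreover have "cinner (v + t *\<^sub>R r) (v + t *\<^sub>R r) = complex_of_real (1 + t\<^sup>2 * nr)"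
      unfolding cinner_add_left cinner_add_right cinner_scaleR_left cinner_scaleR_right
      by (simp add: vv vr rv rr power2_eq_square)
    then have "(norm (v + t *\<^sub>R r))\<^sup>2 = 1 + t\<^sup>2 * nr" by (metis cinner_self of_real_eq_iff)
    moreover have "v + t *\<^sub>R r \<in> W" by (intro subspace_add subspace_scale W rW v)
    ultimately show ?thesis using max[of "v + t *\<^sub>R r"] by (simp add: lam_def algebra_simps)
  qed
  then have "nr \<le> 0" by (meson quadratic_nonpos_imp_nonpos)
  then have "r = 0" by (simp add: nr_def)
  then show ?thesis by (simp add: r_def lam_def scaleR_eq_of_real_smult)
qed

lemma hermitian_eigenvector_in_invariant_subspace:
  fixes A :: "complex^'n^'n"
  assumes herm: "hermitian A" and W: "subspace W" and inv: "\<And>x. x \<in> W \<Longrightarrow> A *v x \<in> W"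
    and w: "w \<in> W" "w \<noteq> 0"
  obtains v lam where "v \<in> W" "cinner v v = 1" "A *v v = complex_of_real lam *s v"
proof -
  define K where "K = sphere 0 1 \<inter> W"
  have "compact K" unfolding K_def by (intro compact_Int_closed compact_sphere closed_subspace W)
  moreover have "sgn w \<in> K"
    using w W by (simp add: K_def norm_sgn sgn_div_norm subspace_scale)
  then have "K \<noteq> {}" by blast
  ultimately obtain v where vK: "v \<in> K" and vmax: "\<And>y. y \<in> K \<Longrightarrow> Re (qform A y) \<le> Re (qform A v)"
    using continuous_attains_sup[of K "\<lambda>v. Re (qform A v)"] continuous_on_qform by blast
  have "Re (qform A y) \<le> Re (qform A v) * (norm y)\<^sup>2" if "y \<in> W" for y
  proof (cases "y = 0")
    case False
    then have "(1 / norm y) *\<^sub>R y \<in> K" using that W by (simp add: K_def subspace_scale)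
    then have "Re (qform A ((1 / norm y) *\<^sub>R y)) \<le> Re (qform A v)" by (rule vmax)
    then have "Re (qform A y) / (norm y)\<^sup>2 \<le> Re (qform A v)"
      by (simp add: qform_scaleR power_divide)
    then show ?thesis using False by (simp add: divide_le_eq)
  qed (simp add: qform_def)
  then have "A *v v = complex_of_real (Re (qform A v)) *s v"
    using vK by (intro hermitian_rayleigh_max_eigenvector[OF herm W inv]) (auto simp: K_def)
  moreover have "cinner v v = 1" using vK by (simp add: K_def cinner_self)
  ultimately show thesis using that vK K_def by blast
qed

text \<open>Each condition \<open>cinner (u i) w = 0\<close> amounts to real orthogonality to \<open>u i\<close> and to
  \<open>\<i> *s u i\<close>, which is fewer than \<open>2 n\<close> conditions in a real space of dimension \<open>2 n\<close>.\<close>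
lemma exists_nonzero_cinner_orthogonal:
  fixes u :: "'i \<Rightarrow> complex^'n"
  assumes fin: "finite I" and card: "card I < CARD('n)"
  obtains w where "w \<noteq> 0" "\<forall>i\<in>I. cinner (u i) w = 0"
proof -
  define S where "S = u ` I \<union> (\<lambda>i. \<i> *s u i) ` I"
  have "dim S \<le> card S" by (rule dim_le_card') (simp add: S_def fin)
  also have "card S \<le> card I + card I"
    unfolding S_def by (intro card_Un_le[THEN order_trans] add_mono card_image_le fin)
  finally have "dim S < DIM(complex^'n)" using card by simp
  then obtain w where "w \<noteq> 0" and orth: "\<And>y. y \<in> span S \<Longrightarrow> orthogonal w y"
    using orthogonal_to_subspace_exists[of S] by blast
  have "cinner (u i) w = 0" if "i \<in> I" for i
    using that orth[of "u i"] orth[of "\<i> *s u i"]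
    by (simp add: cinner_eq_0_iff_orthogonal S_def span_base orthogonal_commute)
  with \<open>w \<noteq> 0\<close> that show thesis by blast
qed

lemma hermitian_orthonormal_eigenvectors:
  fixes A :: "complex^'n^'n" and I :: "'n set"
  assumes herm: "hermitian A"
  shows "\<exists>(u :: 'n \<Rightarrow> complex^'n) l. (\<forall>i\<in>I. \<forall>j\<in>I. cinner (u i) (u j) = (if i = j then 1 else 0))
           \<and> (\<forall>i\<in>I. A *v u i = complex_of_real (l i) *s u i)"
  using finite [of I]
proof (induction I rule: finite_induct)
  case (insert j I)
  then obtain u l where orth: "\<forall>i\<in>I. \<forall>k\<in>I. cinner (u i) (u k) = (if i = k then 1 else 0)"
    and eig: "\<forall>i\<in>I. A *v u i = complex_of_real (l i) *s u i" by blast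
  define W where "W = {v. \<forall>i\<in>I. cinner (u i) v = 0}"
  have "subspace W"
    by (simp add: W_def subspace_def cinner_add_right cinner_scaleR_right)
  moreover have "A *v x \<in> W" if "x \<in> W" for x
    using that eig hermitian_cinner[OF herm, of "u _" x] by (simp add: W_def cinner_smult_left)
  moreover have "card I < CARD('n)"
    using insert by (intro psubset_card_mono) auto
  then obtain w where "w \<noteq> 0" "w \<in> W"
    using exists_nonzero_cinner_orthogonal[OF insert(1)] unfolding W_def by blast
  ultimately obtain v lam where "v \<in> W" "cinner v v = 1" "A *v v = complex_of_real lam *s v"
    using hermitian_eigenvector_in_invariant_subspace[OF herm] by metis
  moreover have "\<forall>i\<in>I. cinner v (u i) = 0"
    using \<open>v \<in> W\<close> cnj_cinner by (metis (mono_tags) W_def complex_cnj_zero mem_Collect_eq)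
  ultimately have "(\<forall>i\<in>insert j I. \<forall>k\<in>insert j I.
        cinner ((u(j := v)) i) ((u(j := v)) k) = (if i = k then 1 else 0))
      \<and> (\<forall>i\<in>insert j I. A *v (u(j := v)) i = complex_of_real ((l(j := lam)) i) *s (u(j := v)) i)"
    using orth eig insert(2) by (auto simp: W_def)
  then show ?case by blast
qed simp

theorem hermitian_spectral_decomposition:
  fixes A :: "complex^'n^'n"
  assumes "hermitian A"
  obtains U d where "unitary U" "A = U ** rdiag d ** cadj U"
proof -
  obtain u :: "'n \<Rightarrow> complex^'n" and l
    where orth: "\<forall>i j. cinner (u i) (u j) = (if i = j then 1 else 0)"
      and eig: "\<forall>i. A *v u i = complex_of_real (l i) *s u i"
    using hermitian_orthonormal_eigenvectors[OF assms, of UNIV] by auto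
  define U :: "complex^'n^'n" where "U = (\<chi> r j. u j $ r)"
  have UU: "cadj U ** U = mat 1"
    using orth by (simp add: vec_eq_iff matrix_matrix_mult_def cadj_def cinner_def mat_def U_def)
  then have UU': "U ** cadj U = mat 1" by (simp add: matrix_left_right_inverse)
  have "(A ** U) $ r $ j = (A *v u j) $ r" for r j
    by (simp add: matrix_matrix_mult_def matrix_vector_mult_def U_def)
  then have "A ** U = U ** rdiag l"
    using eig by (simp add: vec_eq_iff matrix_mul_rdiag_nth U_def mult.commute)
  then have "A = U ** rdiag l ** cadj U"
    by (metis UU' matrix_mul_assoc matrix_mul_rid)
  with UU UU' that show thesis unfolding unitary_def by blast
qed

section \<open>Functional calculus\<close>

lemma rdiag_intertwine_fun:
  assumes "W ** rdiag d = rdiag e ** W"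
  shows "W ** rdiag (g \<circ> d) = rdiag (g \<circ> e) ** W"
proof -
  have "W $ i $ j * complex_of_real (d j) = complex_of_real (e i) * W $ i $ j" for i j
    using arg_cong[OF assms, of "\<lambda>M. M $ i $ j"]
    by (simp add: matrix_mul_rdiag_nth rdiag_matrix_mul_nth)
  then have "W $ i $ j = 0 \<or> d j = e i" for i j by auto
  then have "W $ i $ j * complex_of_real (g (d j)) = complex_of_real (g (e i)) * W $ i $ j" for i j
    by (metis mult.commute mult_zero_left)
  then show ?thesis by (simp add: vec_eq_iff matrix_mul_rdiag_nth rdiag_matrix_mul_nth)
qed

text \<open>Since \<^const>\<open>matfun\<close> uses an arbitrary eigendecomposition, this makes it well defined:
  \<open>cadj V ** U\<close> intertwines the two diagonal forms, hence also their images under \<open>g\<close>.\<close>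
lemma unitary_conj_fun_unique:
  assumes U: "unitary U" and V: "unitary V"
    and eq: "U ** rdiag d ** cadj U = V ** rdiag e ** cadj V"
  shows "U ** rdiag (g \<circ> d) ** cadj U = V ** rdiag (g \<circ> e) ** cadj V"
proof -
  define W where "W = cadj V ** U"
  have UU: "cadj U ** U = mat 1" "U ** cadj U = mat 1" using U by (auto simp: unitary_def)
  have VV: "cadj V ** V = mat 1" "V ** cadj V = mat 1" using V by (auto simp: unitary_def)
  have "W ** rdiag d = cadj V ** (U ** rdiag d ** cadj U) ** U"
    by (metis W_def matrix_mul_assoc UU(1) matrix_mul_rid)
  also have "\<dots> = rdiag e ** W"
    by (simp add: eq W_def matrix_mul_assoc VV)
  finally have Wg: "W ** rdiag (g \<circ> d) = rdiag (g \<circ> e) ** W" by (rule rdiag_intertwine_fun)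
  have "U = V ** W" by (simp add: W_def matrix_mul_assoc VV)
  then have "U ** rdiag (g \<circ> d) ** cadj U = V ** (W ** rdiag (g \<circ> d)) ** cadj U"
    by (simp add: matrix_mul_assoc)
  also have "\<dots> = V ** rdiag (g \<circ> e) ** (W ** cadj U)"
    by (simp add: Wg matrix_mul_assoc)
  also have "W ** cadj U = cadj V"
    by (simp add: W_def matrix_mul_assoc[symmetric] UU)
  finally show ?thesis .
qed

lemma matfun_unitary_conj:
  assumes "unitary U"
  shows "matfun g (U ** rdiag d ** cadj U) = U ** rdiag (g \<circ> d) ** cadj U"
proof -
  have "\<exists>M U' d'. unitary U' \<and> U ** rdiag d ** cadj U = U' ** rdiag d' ** cadj U'
      \<and> M = U' ** rdiag (g \<circ> d') ** cadj U'"
    using assms by blast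
  from someI_ex[OF this] obtain V e
    where "unitary V" "U ** rdiag d ** cadj U = V ** rdiag e ** cadj V"
    and "matfun g (U ** rdiag d ** cadj U) = V ** rdiag (g \<circ> e) ** cadj V"
    unfolding matfun_def by blast
  then show ?thesis using unitary_conj_fun_unique[OF assms] by metis
qed

lemma hermitian_matfun_decomposition:
  assumes "hermitian A"
  obtains U d where "unitary U" "A = U ** rdiag d ** cadj U"
    "\<And>g. matfun g A = U ** rdiag (g \<circ> d) ** cadj U"
  using hermitian_spectral_decomposition[OF assms] matfun_unitary_conj by metis

lemma hermitian_matfun: "hermitian A \<Longrightarrow> hermitian (matfun g A)"
  by (metis hermitian_matfun_decomposition hermitian_unitary_conj)

lemma rel_entropy_self:
  assumes "hermitian z"
  shows "rel_entropy z z = 0"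
proof -
  obtain U d where U: "unitary U" and z: "z = U ** rdiag d ** cadj U"
    and mf: "\<And>g. matfun g z = U ** rdiag (g \<circ> d) ** cadj U"
    using hermitian_matfun_decomposition[OF assms] by blast
  have "z ** mlog z = matfun (\<lambda>t. t * ln t) z"
    by (subst (1) z) (simp add: mlog_def mf unitary_conj_mult[OF U] o_def)
  then show ?thesis by (simp add: rel_entropy_def negentropy_def)
qed

lemma unitary_conj_qform:
  assumes "unitary U"
  shows "qform (U ** rdiag d ** cadj U) v
    = complex_of_real (\<Sum>j\<in>UNIV. d j * (cmod ((cadj U *v v) $ j))\<^sup>2)"
proof -
  define w where "w = cadj U *v v"
  have "(U ** rdiag d ** cadj U) *v v = U *v (rdiag d *v w)"
    by (simp add: w_def matrix_vector_mul_assoc matrix_mul_assoc)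
  then have "qform (U ** rdiag d ** cadj U) v = cinner w (rdiag d *v w)"
    by (simp add: qform_eq_cinner cinner_matrix_vector_mult w_def)
  also have "\<dots> = (\<Sum>j\<in>UNIV. complex_of_real (d j) * (cnj (w $ j) * w $ j))"
    by (simp add: cinner_def rdiag_mult_vec_nth mult.left_commute)
  also have "\<dots> = complex_of_real (\<Sum>j\<in>UNIV. d j * (cmod (w $ j))\<^sup>2)"
    by (simp only: cnj_mult_self of_real_sum of_real_mult)
  finally show ?thesis by (simp add: w_def)
qed

lemma unitary_conj_qform_column:
  assumes "unitary U"
  shows "Re (qform (U ** rdiag d ** cadj U) (U *v axis i 1)) = d i"
proof -
  have "cadj U *v (U *v axis i 1) = axis i 1"
    using assms by (simp add: matrix_vector_mul_assoc unitary_def)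
  moreover have "(\<Sum>j\<in>UNIV. d j * (cmod (axis i (1::complex) $ j))\<^sup>2)
      = (\<Sum>j\<in>UNIV. if j = i then d i else 0)"
    by (intro sum.cong) (auto simp: axis_def)
  ultimately show ?thesis by (simp add: unitary_conj_qform[OF assms])
qed

lemma density_ri_subset_density: "density_ri \<subseteq> density"
proof
  fix x :: "complex^'n^'n" assume "x \<in> density_ri"
  then have "pd x" "trace x = 1" by (auto simp: density_ri_def)
  moreover have "0 \<le> Re (qform x v)" for v
    using \<open>pd x\<close> by (cases "v = 0") (auto simp: pd_def qform_def less_imp_le)
  ultimately show "x \<in> density" by (auto simp: density_def psd_def pd_def)
qed

lemma density_hermitian: "x \<in> density \<Longrightarrow> hermitian x"
  by (simp add: density_def psd_def)

lemma density_spectral_decomposition: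
  assumes "x \<in> density"
  obtains U p where "unitary U" "x = U ** rdiag p ** cadj U" "\<forall>i. p i \<ge> 0" "(\<Sum>i\<in>UNIV. p i) = 1"
proof -
  obtain U p where U: "unitary U" and x: "x = U ** rdiag p ** cadj U"
    using hermitian_spectral_decomposition density_hermitian[OF assms] by blast
  have "0 \<le> Re (qform x (U *v axis i 1))" for i
    using assms by (simp add: density_def psd_def)
  then have "p i \<ge> 0" for i by (simp add: x unitary_conj_qform_column[OF U])
  moreover have "(\<Sum>i\<in>UNIV. p i) = 1"
    using assms trace_unitary_conj[OF U, of p] by (simp add: x density_def del: of_real_sum)
  ultimately show thesis using that U x by blast
qed

lemma density_ri_spectral_decomposition:
  assumes "x \<in> density_ri"
  obtains U p where "unitary U" "x = U ** rdiag p ** cadj U" "\<forall>i. p i > 0" "(\<Sum>i\<in>UNIV. p i) = 1"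
proof -
  obtain U p where U: "unitary U" and x: "x = U ** rdiag p ** cadj U" and "(\<Sum>i\<in>UNIV. p i) = 1"
    using density_spectral_decomposition assms density_ri_subset_density by blast
  moreover have "U *v axis i 1 \<noteq> 0" for i
    using U by (metis axis_nth matrix_vector_mul_assoc matrix_vector_mul_lid
        matrix_vector_mult_0_right one_neq_zero unitary_def zero_index)
  then have "0 < Re (qform x (U *v axis i 1))" for i
    using assms by (simp add: density_ri_def pd_def)
  then have "p i > 0" for i by (simp add: x unitary_conj_qform_column[OF U])
  ultimately show thesis using that by blast
qed

lemma unitary_conj_in_density_ri:
  assumes U: "unitary U" and q: "\<forall>j. q j > 0" "(\<Sum>j\<in>UNIV. q j) = 1"
  shows "U ** rdiag q ** cadj U \<in> density_ri"
proof -
  have "0 < Re (qform (U ** rdiag q ** cadj U) v)" if "v \<noteq> 0" for v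
  proof -
    have "U *v (cadj U *v v) = v" using U by (simp add: matrix_vector_mul_assoc unitary_def)
    then obtain j where j: "(cadj U *v v) $ j \<noteq> 0"
      using \<open>v \<noteq> 0\<close> by (metis matrix_vector_mult_0_right vec_eq_iff zero_index)
    have "0 < q j * (cmod ((cadj U *v v) $ j))\<^sup>2" using j q by simp
    also have "\<dots> \<le> (\<Sum>j\<in>UNIV. q j * (cmod ((cadj U *v v) $ j))\<^sup>2)"
      using q by (intro member_le_sum) (simp_all add: less_imp_le)
    finally show ?thesis by (simp add: unitary_conj_qform[OF U])
  qed
  moreover have "trace (U ** rdiag q ** cadj U) = 1"
    using trace_unitary_conj[OF U] q by (simp del: of_real_sum)
  ultimately show ?thesis by (simp add: density_ri_def pd_def hermitian_unitary_conj)
qed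

lemma qform_add: "qform (A + B) v = qform A v + qform B v"
  by (simp add: qform_eq_cinner matrix_vector_mult_add_rdistrib cinner_add_right)

lemma qform_scaleR_matrix: "qform (c *\<^sub>R A) v = complex_of_real c * qform A v"
  by (simp add: qform_def matrix_vector_mult_def sum_distrib_left mult_ac)
    (simp add: scaleR_conv_of_real)

lemma convex_density_ri: "convex density_ri"
proof (rule convexI)
  fix x y :: "complex^'n^'n" and u v :: real
  assume x: "x \<in> density_ri" and y: "y \<in> density_ri" and uv: "u \<ge> 0" "v \<ge> 0" "u + v = 1"
  have "hermitian (u *\<^sub>R x + v *\<^sub>R y)"
    using x y by (simp add: density_ri_def pd_def hermitian_def cadj_add cadj_scaleR)
  moreover have "0 < Re (qform (u *\<^sub>R x + v *\<^sub>R y) w)" if "w \<noteq> 0" for w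
  proof -
    have "Re (qform x w) > 0" "Re (qform y w) > 0"
      using x y \<open>w \<noteq> 0\<close> by (auto simp: density_ri_def pd_def)
    moreover have "u > 0 \<or> v > 0" using uv by linarith
    ultimately show ?thesis
      using uv by (auto simp: qform_add qform_scaleR_matrix add_pos_nonneg add_nonneg_pos)
  qed
  moreover have "trace (u *\<^sub>R x + v *\<^sub>R y) = 1"
    using x y uv by (simp add: density_ri_def trace_add trace_scaleR) (metis of_real_1 of_real_add)
  ultimately show "u *\<^sub>R x + v *\<^sub>R y \<in> density_ri" by (simp add: density_ri_def pd_def)
qed

section \<open>Klein's inequality\<close>

lemma xlnx_bregman_nonneg:
  fixes p q :: real
  assumes "p \<ge> 0" "q > 0"
  shows "p - q \<le> p * ln p - p * ln q"
proof (cases "p = 0")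
  case False
  then have "p > 0" using assms by simp
  have "p * ln (q / p) \<le> p * (q / p - 1)"
    using \<open>p > 0\<close> assms by (intro mult_left_mono ln_le_minus_one) auto
  then show ?thesis using \<open>p > 0\<close> assms by (simp add: ln_div algebra_simps)
qed (use assms in simp)

lemma xlnx_bregman_eq_0_imp_eq:
  fixes p q :: real
  assumes "p \<ge> 0" "q > 0" "p * ln p - p * ln q = p - q"
  shows "p = q"
proof (cases "p = 0")
  case False
  then have "p > 0" using assms by simp
  then have "p * ln (q / p) = p * (q / p - 1)"
    using assms by (simp add: ln_div algebra_simps)
  then have "ln (q / p) = q / p - 1" using \<open>p > 0\<close> by simp
  then show ?thesis using \<open>p > 0\<close> assms ln_eq_minus_one[of "q / p"] by simp
qed (use assms in simp)

lemma unitary_row_norm: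
  assumes "unitary W"
  shows "(\<Sum>j\<in>UNIV. (cmod (W $ i $ j))\<^sup>2) = 1"
proof -
  have "complex_of_real (\<Sum>j\<in>UNIV. (cmod (W $ i $ j))\<^sup>2) = (W ** cadj W) $ i $ i"
    unfolding of_real_sum complex_norm_square by (simp add: matrix_matrix_mult_def cadj_def)
  also have "\<dots> = 1" using assms by (simp add: unitary_def mat_def)
  finally show ?thesis by (metis of_real_eq_1_iff)
qed

lemma unitary_column_norm:
  assumes "unitary W"
  shows "(\<Sum>i\<in>UNIV. (cmod (W $ i $ j))\<^sup>2) = 1"
proof -
  have "complex_of_real (\<Sum>i\<in>UNIV. (cmod (W $ i $ j))\<^sup>2) = (cadj W ** W) $ j $ j"
    unfolding of_real_sum cnj_mult_self[symmetric] by (simp add: matrix_matrix_mult_def cadj_def)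
  also have "\<dots> = 1" using assms by (simp add: unitary_def mat_def)
  finally show ?thesis by (metis of_real_eq_1_iff)
qed

lemma trace_rdiag_conj_rdiag:
  "trace (rdiag a ** W ** rdiag b ** cadj W)
     = complex_of_real (\<Sum>i\<in>UNIV. \<Sum>j\<in>UNIV. a i * b j * (cmod (W $ i $ j))\<^sup>2)"
  unfolding of_real_sum of_real_mult complex_norm_square trace_def
  by (simp add: matrix_matrix_mult_def[of "rdiag a ** W ** rdiag b"] matrix_mul_rdiag_nth
      rdiag_matrix_mul_nth cadj_def mult_ac)

text \<open>Writing both arguments in their eigenbases, with overlap weights
  \<open>\<bar>\<langle>v\<^sub>i, u\<^sub>j\<rangle>\<bar>\<^sup>2\<close> forming a doubly stochastic matrix, the relative entropy becomes a
  nonnegative combination of scalar Bregman divergences of \<open>t ln t\<close>.\<close>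
lemma rel_entropy_unitary_conj:
  assumes V: "unitary V" and U: "unitary U" and sums: "(\<Sum>i\<in>UNIV. p i) = (\<Sum>j\<in>UNIV. q j)"
  shows "rel_entropy (V ** rdiag p ** cadj V) (U ** rdiag q ** cadj U)
    = (\<Sum>i\<in>UNIV. \<Sum>j\<in>UNIV. (cmod ((cadj V ** U) $ i $ j))\<^sup>2
         * ((p i * ln (p i) - p i * ln (q j)) - (p i - q j)))"
proof -
  define W where "W = cadj V ** U"
  define a where "a i j = (cmod (W $ i $ j))\<^sup>2" for i j
  have W: "unitary W" unfolding W_def by (intro unitary_matrix_mul unitary_cadj V U)
  have rows: "(\<Sum>j\<in>UNIV. a i j) = 1" for i using unitary_row_norm[OF W] by (simp add: a_def)
  have cols: "(\<Sum>i\<in>UNIV. a i j) = 1" for j using unitary_column_norm[OF W] by (simp add: a_def)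
  have VV: "M ** V ** cadj V = M" for M
    using V by (metis matrix_mul_assoc matrix_mul_rid unitary_def)
  have neg: "negentropy (V ** rdiag p ** cadj V) = (\<Sum>i\<in>UNIV. \<Sum>j\<in>UNIV. a i j * (p i * ln (p i)))"
    using V by (simp add: negentropy_def matfun_unitary_conj trace_unitary_conj o_def
        flip: sum_distrib_right add: rows)
  have "(V ** rdiag p ** cadj V) ** mlog (U ** rdiag q ** cadj U)
      = V ** (rdiag p ** W ** rdiag (ln \<circ> q) ** cadj W) ** cadj V"
    using U by (simp add: mlog_def matfun_unitary_conj cadj_matrix_mul W_def matrix_mul_assoc VV)
  then have tr: "Re (trace ((V ** rdiag p ** cadj V) ** mlog (U ** rdiag q ** cadj U)))
      = (\<Sum>i\<in>UNIV. \<Sum>j\<in>UNIV. a i j * (p i * ln (q j)))"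
    using V by (simp add: trace_unitary_similar trace_rdiag_conj_rdiag a_def mult_ac)
  have "(\<Sum>i\<in>UNIV. \<Sum>j\<in>UNIV. a i j * (p i - q j)) = 0"
    using sums by (simp add: right_diff_distrib sum_subtractf sum.swap[of _ UNIV UNIV]
        flip: sum_distrib_right add: rows cols)
  then show ?thesis
    by (simp add: rel_entropy_def neg tr right_diff_distrib sum_subtractf a_def W_def)
qed

lemma unitary_conj_eq_if_overlap:
  assumes V: "unitary V" and U: "unitary U"
    and overlap: "\<And>i j. (cadj V ** U) $ i $ j \<noteq> 0 \<Longrightarrow> p i = q j"
  shows "V ** rdiag p ** cadj V = U ** rdiag q ** cadj U"
proof -
  define W where "W = cadj V ** U"
  have "W $ i $ j * complex_of_real (q j) = complex_of_real (p i) * W $ i $ j" for i j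
    using overlap[of i j] by (cases "W $ i $ j = 0") (simp_all add: W_def mult.commute)
  then have Wq: "W ** rdiag q = rdiag p ** W"
    by (simp add: vec_eq_iff matrix_mul_rdiag_nth rdiag_matrix_mul_nth)
  have "U = V ** W" using V by (simp add: W_def unitary_def matrix_mul_assoc)
  then have "U ** rdiag q ** cadj U = V ** rdiag p ** (W ** cadj U)"
    by (simp add: matrix_mul_assoc Wq flip: matrix_mul_assoc[of V W])
  also have "W ** cadj U = cadj V"
    using U by (simp add: W_def unitary_def flip: matrix_mul_assoc)
  finally show ?thesis by (rule sym)
qed

theorem klein_inequality:
  assumes x: "x \<in> density" and \<sigma>: "\<sigma> \<in> density_ri"
  shows "0 \<le> rel_entropy x \<sigma>" and "rel_entropy x \<sigma> = 0 \<Longrightarrow> x = \<sigma>"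
proof -
  obtain V p where V: "unitary V" and xV: "x = V ** rdiag p ** cadj V"
    and p: "\<forall>i. p i \<ge> 0" "(\<Sum>i\<in>UNIV. p i) = 1"
    using density_spectral_decomposition[OF x] by blast
  obtain U q where U: "unitary U" and \<sigma>U: "\<sigma> = U ** rdiag q ** cadj U"
    and q: "\<forall>j. q j > 0" "(\<Sum>j\<in>UNIV. q j) = 1"
    using density_ri_spectral_decomposition[OF \<sigma>] by blast
  define g where "g i j = (cmod ((cadj V ** U) $ i $ j))\<^sup>2
    * ((p i * ln (p i) - p i * ln (q j)) - (p i - q j))" for i j
  have g: "g i j \<ge> 0" for i j
    unfolding g_def using xlnx_bregman_nonneg[of "p i" "q j"] p q by simp
  have S: "rel_entropy x \<sigma> = (\<Sum>i\<in>UNIV. \<Sum>j\<in>UNIV. g i j)"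
    using rel_entropy_unitary_conj[OF V U] p q by (simp add: xV \<sigma>U g_def)
  then show "0 \<le> rel_entropy x \<sigma>" by (simp add: g sum_nonneg)
  assume "rel_entropy x \<sigma> = 0"
  then have "g i j = 0" for i j
    using S g by (simp add: sum_nonneg_eq_0_iff sum_nonneg)
  then have "p i = q j" if "(cadj V ** U) $ i $ j \<noteq> 0" for i j
    using that \<open>g i j = 0\<close> p q xlnx_bregman_eq_0_imp_eq[of "p i" "q j"] by (simp add: g_def)
  then show "x = \<sigma>" unfolding xV \<sigma>U by (rule unitary_conj_eq_if_overlap[OF V U])
qed

section \<open>The Blahut--Arimoto step as a mirror descent step\<close>

definition gibbs_state :: "complex^'n^'n \<Rightarrow> complex^'n^'n" where
  "gibbs_state H = (1 / Re (trace (mexp H))) *\<^sub>R mexp H"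

lemma qba_step_eq_gibbs_state: "qba_step F \<gamma> y = gibbs_state (mlog y - (1 / \<gamma>) *\<^sub>R F y)"
  by (simp add: qba_step_def gibbs_state_def Let_def)

lemma hermitian_gibbs_state:
  assumes "hermitian H"
  shows "gibbs_state H \<in> density_ri"
    and "mlog (gibbs_state H) = H - ln (Re (trace (mexp H))) *\<^sub>R mat 1"
proof -
  obtain U h where U: "unitary U" and H: "H = U ** rdiag h ** cadj U"
    and mf: "\<And>g. matfun g H = U ** rdiag (g \<circ> h) ** cadj U"
    using hermitian_matfun_decomposition[OF assms] by blast
  have E: "mexp H = U ** rdiag (exp \<circ> h) ** cadj U" by (simp only: mexp_def mf)
  define Z where "Z = (\<Sum>j\<in>UNIV. exp (h j))"
  have Z: "Z > 0" unfolding Z_def by (simp add: sum_pos)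
  have trace_mexp: "Re (trace (mexp H)) = Z"
    unfolding E trace_unitary_conj[OF U] Z_def by simp
  define q where "q j = exp (h j) / Z" for j
  have G: "gibbs_state H = U ** rdiag q ** cadj U"
    unfolding gibbs_state_def trace_mexp unfolding E scaleR_unitary_conj
    by (simp add: q_def[abs_def])
  have "(\<Sum>j\<in>UNIV. q j) = 1"
    unfolding q_def sum_divide_distrib[symmetric] Z_def[symmetric] using Z by simp
  moreover have "\<forall>j. q j > 0" using Z by (simp add: q_def)
  ultimately show "gibbs_state H \<in> density_ri" by (simp add: G unitary_conj_in_density_ri[OF U])
  have "ln \<circ> q = (\<lambda>j. h j - ln Z)" using Z by (simp add: q_def o_def ln_div)
  then have "mlog (gibbs_state H) = U ** rdiag (\<lambda>j. h j - ln Z) ** cadj U"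
    by (simp only: G mlog_def matfun_unitary_conj[OF U])
  also have "\<dots> = H - ln Z *\<^sub>R mat 1"
    unfolding H by (rule unitary_conj_diff_const[OF U])
  finally show "mlog (gibbs_state H) = H - ln (Re (trace (mexp H))) *\<^sub>R mat 1"
    unfolding trace_mexp .
qed

lemma rel_entropy_log_shift:
  assumes "mlog y = mlog z + c *\<^sub>R mat 1 + M"
  shows "rel_entropy x y = rel_entropy x z - c * Re (trace x) - hs_inner x M"
  by (simp add: rel_entropy_def hs_inner_def assms matrix_add_ldistrib matrix_scalar_ac
      scalar_matrix_assoc[symmetric] trace_add trace_scaleR)

text \<open>Up to an additive constant, the mirror descent objective is \<open>\<gamma> S(x \<parallel> x\<^sup>+)\<close> with
  \<open>x\<^sup>+\<close> the Gibbs state of \<open>log y - F(y)/\<gamma>\<close>, so Klein's inequality identifies \<open>x\<^sup>+\<close> as its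
  unique minimiser over the density matrices.\<close>
lemma qba_step_mirror_descent:
  assumes y: "y \<in> density_ri" and F: "hermitian (F y)" and \<gamma>: "\<gamma> > 0"
  defines "\<Phi> \<equiv> \<lambda>x. hs_inner (F y) x + \<gamma> * bregman_negent x y"
  shows "qba_step F \<gamma> y \<in> density_ri"
    and "x \<in> density \<Longrightarrow> \<Phi> (qba_step F \<gamma> y) \<le> \<Phi> x"
    and "x \<in> density \<Longrightarrow> \<Phi> x \<le> \<Phi> (qba_step F \<gamma> y) \<Longrightarrow> x = qba_step F \<gamma> y"
proof -
  define H where "H = mlog y - (1 / \<gamma>) *\<^sub>R F y"
  have "hermitian y" using y density_ri_subset_density density_hermitian by blast
  then have "hermitian H" unfolding H_def mlog_def
    by (intro hermitian_diff hermitian_matfun hermitian_scaleR F)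
  have step: "qba_step F \<gamma> y = gibbs_state H" by (simp add: qba_step_eq_gibbs_state H_def)
  note G = hermitian_gibbs_state[OF \<open>hermitian H\<close>, folded step]
  show ri: "qba_step F \<gamma> y \<in> density_ri" by (rule G(1))
  define c where "c = - \<gamma> * ln (Re (trace (mexp H)))"
  have shift: "rel_entropy x y = rel_entropy x (qba_step F \<gamma> y)
      - ln (Re (trace (mexp H))) * Re (trace x) - hs_inner x ((1 / \<gamma>) *\<^sub>R F y)" for x
    by (rule rel_entropy_log_shift) (simp add: G(2) H_def)
  have \<Phi>: "\<Phi> x = \<gamma> * rel_entropy x (qba_step F \<gamma> y) + c" if "x \<in> density" for x
    using that y density_ri_subset_density \<gamma>
    by (auto simp: \<Phi>_def c_def bregman_negent_def shift hs_inner_scaleR_right hs_inner_commute[of x]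
        trace_sub density_def field_simps)
  have "qba_step F \<gamma> y \<in> density" using ri density_ri_subset_density by blast
  then have \<Phi>_step: "\<Phi> (qba_step F \<gamma> y) = c"
    by (simp add: \<Phi> rel_entropy_self density_hermitian)
  show "\<Phi> (qba_step F \<gamma> y) \<le> \<Phi> x" if "x \<in> density"
    using klein_inequality(1)[OF that ri] \<gamma> by (simp add: \<Phi>_step \<Phi>[OF that])
  show "x = qba_step F \<gamma> y" if "x \<in> density" "\<Phi> x \<le> \<Phi> (qba_step F \<gamma> y)"
    using that klein_inequality[OF that(1) ri] \<gamma>
    by (simp add: \<Phi>_step \<Phi>[OF that(1)] mult_le_0_iff)
qed

section \<open>Relative smoothness and relative strong convexity\<close>

lemma convex_on_linear_support:
  assumes S: "convex S"
    and support: "\<And>z. z \<in> S \<Longrightarrow> \<exists>M. hs_inner z M = g z \<and> (\<forall>w\<in>S. hs_inner w M \<le> g w)"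
  shows "convex_on S g"
proof (intro convex_onI S)
  fix x y and u :: real
  assume x: "x \<in> S" and y: "y \<in> S" and u: "0 < u" "u < 1"
  have "(1 - u) *\<^sub>R x + u *\<^sub>R y \<in> S" using S x y u by (simp add: convex_def)
  then obtain M where M: "hs_inner ((1 - u) *\<^sub>R x + u *\<^sub>R y) M = g ((1 - u) *\<^sub>R x + u *\<^sub>R y)"
    and below: "\<forall>w\<in>S. hs_inner w M \<le> g w"
    using support by blast
  have "hs_inner ((1 - u) *\<^sub>R x + u *\<^sub>R y) M = (1 - u) * hs_inner x M + u * hs_inner y M"
    by (simp add: hs_inner_add_left hs_inner_scaleR_left)
  also have "\<dots> \<le> (1 - u) * g x + u * g y"
    using below x y u by (intro add_mono mult_left_mono) auto
  finally show "g ((1 - u) *\<^sub>R x + u *\<^sub>R y) \<le> (1 - u) * g x + u * g y" by (simp add: M)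
qed

text \<open>The bound is exactly the statement that \<open>X \<mapsto> tr[X (c log z - G z)]\<close> supports the
  function from below and touches it at \<open>z\<close>.\<close>
lemma convex_on_of_rel_entropy_bound:
  fixes G :: "complex^'n^'n \<Rightarrow> complex^'n^'n"
  assumes bound: "\<forall>x\<in>density_ri. \<forall>y\<in>density_ri. hs_inner x (G x - G y) \<le> c * rel_entropy x y"
  shows "convex_on density_ri (\<lambda>x. c * negentropy x - hs_inner x (G x))"
proof (rule convex_on_linear_support[OF convex_density_ri])
  fix z :: "complex^'n^'n" assume z: "z \<in> density_ri"
  have herm: "hermitian w" if "w \<in> density_ri" for w
    using that density_ri_subset_density density_hermitian by blast
  define M where "M = c *\<^sub>R mlog z - G z"
  have M: "hs_inner w M = c * (negentropy w - rel_entropy w z) - hs_inner w (G z)" for w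
    unfolding M_def hs_inner_diff_right hs_inner_scaleR_right
    by (simp add: rel_entropy_def hs_inner_def)
  have "hs_inner z M = c * negentropy z - hs_inner z (G z)"
    by (simp add: M rel_entropy_self[OF herm[OF z]])
  moreover have "hs_inner w M \<le> c * negentropy w - hs_inner w (G w)" if "w \<in> density_ri" for w
  proof -
    have "hs_inner w (G w) - hs_inner w (G z) \<le> c * rel_entropy w z"
      using bound that z by (simp add: hs_inner_diff_right)
    then show ?thesis by (simp add: M right_diff_distrib)
  qed
  ultimately show "\<exists>M. hs_inner z M = c * negentropy z - hs_inner z (G z)
      \<and> (\<forall>w\<in>density_ri. hs_inner w M \<le> c * negentropy w - hs_inner w (G w))" by blast
qed

lemma convex_on_of_rel_entropy_lower_bound:
  fixes G :: "complex^'n^'n \<Rightarrow> complex^'n^'n"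
  assumes bound: "\<forall>x\<in>density_ri. \<forall>y\<in>density_ri. a * rel_entropy x y \<le> hs_inner x (G x - G y)"
  shows "convex_on density_ri (\<lambda>x. hs_inner x (G x) - a * negentropy x)"
proof -
  have "hs_inner x (- G x - - G y) \<le> - a * rel_entropy x y"
    if "x \<in> density_ri" "y \<in> density_ri" for x y
    using bound[rule_format, OF that] by (simp add: hs_inner_diff_right hs_inner_minus_right)
  then have "convex_on density_ri (\<lambda>x. (- a) * negentropy x - hs_inner x (- G x))"
    by (intro convex_on_of_rel_entropy_bound) blast
  then show ?thesis by (simp add: hs_inner_minus_right)
qed

section \<open>The gradient of \<open>x \<mapsto> \<langle>x, F x\<rangle>\<close>\<close>

lemma norm_matrix_nth_le: "norm ((A::'a::real_normed_vector^'n^'m) $ i $ k) \<le> norm A"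
  by (meson Finite_Cartesian_Product.norm_nth_le order_trans)

lemma abs_hs_inner_le:
  fixes A B :: "complex^'n^'n"
  shows "\<bar>hs_inner A B\<bar> \<le> (real CARD('n))\<^sup>2 * norm A * norm B"
proof -
  have "trace (A ** B) = (\<Sum>i\<in>UNIV. \<Sum>k\<in>UNIV. A $ i $ k * B $ k $ i)"
    by (simp add: trace_def matrix_matrix_mult_def)
  then have "\<bar>hs_inner A B\<bar> \<le> cmod (\<Sum>i\<in>UNIV. \<Sum>k\<in>UNIV. A $ i $ k * B $ k $ i)"
    by (metis hs_inner_def abs_Re_le_cmod)
  also have "\<dots> \<le> (\<Sum>i\<in>UNIV. \<Sum>k\<in>UNIV. cmod (A $ i $ k * B $ k $ i))"
    by (rule order_trans[OF norm_sum sum_mono]) (rule norm_sum)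
  also have "\<dots> \<le> (\<Sum>i\<in>(UNIV::'n set). \<Sum>k\<in>(UNIV::'n set). norm A * norm B)"
    by (intro sum_mono) (simp add: norm_mult mult_mono norm_matrix_nth_le)
  also have "\<dots> = (real CARD('n))\<^sup>2 * norm A * norm B" by (simp add: power2_eq_square)
  finally show ?thesis .
qed

lemma cmod_qform_le:
  fixes B :: "complex^'n^'n"
  shows "cmod (qform B v) \<le> (real CARD('n))\<^sup>2 * norm B * (norm v)\<^sup>2"
proof -
  have "cmod (qform B v) = cmod (\<Sum>i\<in>UNIV. \<Sum>k\<in>UNIV. cnj (v $ i) * B $ i $ k * v $ k)"
    by (simp add: qform_def matrix_vector_mult_def sum_distrib_left mult_ac)
  also have "\<dots> \<le> (\<Sum>i\<in>UNIV. \<Sum>k\<in>UNIV. cmod (cnj (v $ i) * B $ i $ k * v $ k))"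
    by (rule order_trans[OF norm_sum sum_mono]) (rule norm_sum)
  also have "\<dots> \<le> (\<Sum>i\<in>(UNIV::'n set). \<Sum>k\<in>(UNIV::'n set). norm v * norm B * norm v)"
    by (intro sum_mono)
      (simp add: norm_mult mult_mono norm_matrix_nth_le Finite_Cartesian_Product.norm_nth_le)
  also have "\<dots> = (real CARD('n))\<^sup>2 * norm B * (norm v)\<^sup>2" by (simp add: power2_eq_square mult_ac)
  finally show ?thesis .
qed

lemma pd_qform_lower_bound:
  fixes A :: "complex^'n^'n"
  assumes "pd A"
  obtains m where "m > 0" "\<And>v. m * (norm v)\<^sup>2 \<le> Re (qform A v)"
proof -
  obtain i :: 'n where True by blast
  have "sgn (axis i (1::complex)) \<in> sphere 0 1"
    by (simp add: norm_sgn axis_eq_0_iff)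
  then obtain v0 where v0: "v0 \<in> sphere 0 1"
    and min: "\<And>v. v \<in> sphere 0 1 \<Longrightarrow> Re (qform A v0) \<le> Re (qform A v)"
    using continuous_attains_inf[of "sphere 0 1" "\<lambda>v. Re (qform A v)"] compact_sphere
      continuous_on_qform
    by blast
  have "v0 \<noteq> 0" using v0 by auto
  then have "Re (qform A v0) > 0" using assms by (simp add: pd_def)
  moreover have "Re (qform A v0) * (norm v)\<^sup>2 \<le> Re (qform A v)" for v
  proof (cases "v = 0")
    case False
    then have "Re (qform A v0) \<le> Re (qform A ((1 / norm v) *\<^sub>R v))" by (intro min) simp
    then show ?thesis using False by (simp add: qform_scaleR power_divide le_divide_eq mult.commute)
  qed (simp add: qform_def)
  ultimately show thesis using that by blast
qed

lemma density_ri_relatively_open: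
  fixes x :: "complex^'n^'n"
  assumes "x \<in> density_ri"
  obtains e where "e > 0" "\<And>y. y \<in> density \<Longrightarrow> dist y x < e \<Longrightarrow> y \<in> density_ri"
proof -
  obtain m where m: "m > 0" and lower: "\<And>v. m * (norm v)\<^sup>2 \<le> Re (qform x v)"
    using pd_qform_lower_bound assms by (auto simp: density_ri_def)
  define C where "C = (real CARD('n))\<^sup>2"
  have C: "C > 0" by (simp add: C_def)
  have "y \<in> density_ri" if y: "y \<in> density" and close: "dist y x < m / C" for y
  proof -
    have "0 < Re (qform y v)" if "v \<noteq> 0" for v
    proof -
      have "C * norm (y - x) < m" using close C by (simp add: dist_norm field_simps)
      then have "C * norm (y - x) * (norm v)\<^sup>2 < m * (norm v)\<^sup>2" using \<open>v \<noteq> 0\<close> by simp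
      moreover have "- Re (qform (y - x) v) \<le> C * norm (y - x) * (norm v)\<^sup>2"
        using cmod_qform_le[of "y - x" v] abs_Re_le_cmod[of "qform (y - x) v"] by (simp add: C_def)
      moreover have "qform y v = qform x v + qform (y - x) v"
        using qform_add[of x "y - x" v] by simp
      ultimately show ?thesis using lower[of v] by simp
    qed
    then show ?thesis using y by (simp add: density_def psd_def density_ri_def pd_def)
  qed
  then show thesis using that m C by (meson divide_pos_pos)
qed

lemma bounded_linear_hs_inner_right: "bounded_linear (\<lambda>h. hs_inner (M::complex^'n^'n) h)"
  by (intro linear_conv_bounded_linear[THEN iffD1] linearI)
    (simp_all add: hs_inner_def matrix_add_ldistrib trace_add matrix_scalar_ac
      scalar_matrix_assoc[symmetric] trace_scaleR)

text \<open>Monotonicity at \<open>(y, x)\<close> and at \<open>(x, y)\<close> squeezes the remainder between \<open>0\<close> and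
  \<open>\<langle>y - x, F y - F x\<rangle>\<close>.\<close>
lemma hs_inner_self_remainder_le:
  fixes F :: "complex^'n^'n \<Rightarrow> complex^'n^'n"
  assumes mono: "\<forall>x\<in>density_ri. \<forall>y\<in>density_ri. 0 \<le> hs_inner x (F x - F y)"
    and x: "x \<in> density_ri" and y: "y \<in> density_ri"
  shows "\<bar>hs_inner y (F y) - (hs_inner x (F x) + hs_inner (F x) (y - x))\<bar>
    \<le> (real CARD('n))\<^sup>2 * norm (y - x) * norm (F y - F x)"
proof -
  have remainder: "hs_inner y (F y) - (hs_inner x (F x) + hs_inner (F x) (y - x))
      = hs_inner y (F y - F x)"
    unfolding hs_inner_commute[of "F x" "y - x"]
    by (simp add: hs_inner_diff_left hs_inner_diff_right)
  have "0 \<le> hs_inner y (F y - F x)" using mono x y by blast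
  moreover have "hs_inner x (F y - F x) \<le> 0"
    using mono x y by (simp add: hs_inner_diff_right)
  then have "hs_inner y (F y - F x) \<le> hs_inner (y - x) (F y - F x)"
    by (simp add: hs_inner_diff_left)
  moreover have "hs_inner (y - x) (F y - F x) \<le> (real CARD('n))\<^sup>2 * norm (y - x) * norm (F y - F x)"
    using abs_hs_inner_le[of "y - x" "F y - F x"] by linarith
  ultimately show ?thesis unfolding remainder by linarith
qed

lemma has_derivative_hs_inner_self:
  fixes F :: "complex^'n^'n \<Rightarrow> complex^'n^'n"
  assumes cont: "continuous_on density F"
    and mono: "\<forall>x\<in>density_ri. \<forall>y\<in>density_ri. 0 \<le> hs_inner x (F x - F y)"
    and x: "x \<in> density_ri"
  shows "((\<lambda>x. hs_inner x (F x)) has_derivative (\<lambda>h. hs_inner (F x) h)) (at x within density)"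
  unfolding has_derivative_within
proof (intro conjI bounded_linear_hs_inner_right)
  define C where "C = (real CARD('n))\<^sup>2"
  obtain e where e: "e > 0" and near: "\<And>y. y \<in> density \<Longrightarrow> dist y x < e \<Longrightarrow> y \<in> density_ri"
    using density_ri_relatively_open[OF x] by blast
  have "\<forall>\<^sub>F y in at x within density. norm ((1 / norm (y - x)) *\<^sub>R
      (hs_inner y (F y) - (hs_inner x (F x) + hs_inner (F x) (y - x)))) \<le> C * norm (F y - F x)"
    unfolding eventually_at
  proof (intro exI[of _ e] conjI e ballI impI)
    fix y assume "y \<in> density" "y \<noteq> x \<and> dist y x < e"
    then show "norm ((1 / norm (y - x)) *\<^sub>R
        (hs_inner y (F y) - (hs_inner x (F x) + hs_inner (F x) (y - x)))) \<le> C * norm (F y - F x)"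
      using hs_inner_self_remainder_le[OF mono x near] by (simp add: C_def divide_le_eq mult_ac)
  qed
  moreover have "((\<lambda>y. C * norm (F y - F x)) \<longlongrightarrow> 0) (at x within density)"
    using cont x density_ri_subset_density
    by (intro tendsto_mult_right_zero tendsto_norm_zero LIM_zero) (auto simp: continuous_on_def)
  ultimately show "((\<lambda>y. (1 / norm (y - x)) *\<^sub>R
      (hs_inner y (F y) - (hs_inner x (F x) + hs_inner (F x) (y - x)))) \<longlongrightarrow> 0) (at x within density)"
    by (rule Lim_null_comparison)
qed

theorem mainTheorem4:
  fixes F :: "complex^'n^'n \<Rightarrow> complex^'n^'n" and \<gamma> :: real
    and x0 :: "complex^'n^'n"
  assumes gamma_pos: "\<gamma> > 0"
    and F_herm: "\<forall>x\<in>density. hermitian (F x)"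
    and F_cont: "continuous_on density F"
    and F_ineq: "\<forall>x\<in>density_ri. \<forall>y\<in>density_ri.
                   0 \<le> hs_inner x (F x - F y) \<and> hs_inner x (F x - F y) \<le> \<gamma> * rel_entropy x y"
    and x0_ri: "x0 \<in> density_ri"
  defines "f \<equiv> (\<lambda>x. hs_inner x (F x))"
  shows
    "(\<forall>k. qba_iter F \<gamma> x0 (Suc k) \<in> density
        \<and> (\<forall>x\<in>density.
              hs_inner (F (qba_iter F \<gamma> x0 k)) (qba_iter F \<gamma> x0 (Suc k))
                + \<gamma> * bregman_negent (qba_iter F \<gamma> x0 (Suc k)) (qba_iter F \<gamma> x0 k)
              \<le> hs_inner (F (qba_iter F \<gamma> x0 k)) x
                + \<gamma> * bregman_negent x (qba_iter F \<gamma> x0 k))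
        \<and> (\<forall>x\<in>density.
              hs_inner (F (qba_iter F \<gamma> x0 k)) x
                + \<gamma> * bregman_negent x (qba_iter F \<gamma> x0 k)
              \<le> hs_inner (F (qba_iter F \<gamma> x0 k)) (qba_iter F \<gamma> x0 (Suc k))
                + \<gamma> * bregman_negent (qba_iter F \<gamma> x0 (Suc k)) (qba_iter F \<gamma> x0 k)
              \<longrightarrow> x = qba_iter F \<gamma> x0 (Suc k)))
     \<and> (\<forall>x\<in>density_ri. f x = hs_inner x (F x)
          \<and> (f has_derivative (\<lambda>h. hs_inner (F x) h)) (at x within density))
     \<and> convex_on density_ri (\<lambda>x. \<gamma> * negentropy x - f x)
     \<and> (\<forall>a>0. (\<forall>x\<in>density_ri. \<forall>y\<in>density_ri. hs_inner x (F x - F y) \<ge> a * rel_entropy x y)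
          \<longrightarrow> convex_on density_ri (\<lambda>x. f x - a * negentropy x))"
proof -
  have F_herm_ri: "hermitian (F x)" if "x \<in> density_ri" for x
    using that F_herm density_ri_subset_density by blast
  have iter_ri: "qba_iter F \<gamma> x0 k \<in> density_ri" for k
    by (induction k) (simp_all add: x0_ri qba_step_mirror_descent(1) F_herm_ri gamma_pos)
  have "qba_iter F \<gamma> x0 (Suc k) \<in> density" for k
    using iter_ri density_ri_subset_density by blast
  moreover note
    qba_step_mirror_descent(2,3)[where F = F, OF iter_ri F_herm_ri[OF iter_ri] gamma_pos]
  moreover have "(f has_derivative (\<lambda>h. hs_inner (F x) h)) (at x within density)"
    if "x \<in> density_ri" for x
    unfolding f_def using F_cont F_ineq that by (intro has_derivative_hs_inner_self) auto
  moreover have "convex_on density_ri (\<lambda>x. \<gamma> * negentropy x - f x)"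
    unfolding f_def using F_ineq by (intro convex_on_of_rel_entropy_bound) auto
  moreover have "convex_on density_ri (\<lambda>x. f x - a * negentropy x)"
    if "\<forall>x\<in>density_ri. \<forall>y\<in>density_ri. hs_inner x (F x - F y) \<ge> a * rel_entropy x y" for a
    unfolding f_def using that by (rule convex_on_of_rel_entropy_lower_bound)
  ultimately show ?thesis by (auto simp: f_def)
qed
end
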